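(* Let $b\in\mathbb{R}$ and let $\gamma_0>0$, $\gamma_1>0$, $\gamma_2<0$, $\gamma_3<0$ be fixed (independent of $B$). For a parameter $B>0$, let $u=u(\cdot\,;B)$ be the solution of \[ u''''(x)=B\,u(x),\qquad x\in\mathbb{R}, \] with $u(b)=\gamma_0$, $u'(b)=\gamma_1$, $u''(b)=\gamma_2$, $u'''(b)=\gamma_3$. For $j=0,1,2,3$ let $z_j=z_j(B)$ denote the smallest zero of $u^{(j)}$ in the interval $(b,\infty)$, with the convention $z_j=\infty$ if $u^{(j)}$ does not vanish in $(b,\infty)$. Then there exists $B>0$ such that $z_1=z_3$. *)

theory Defs
  imports "HOL-Analysis.Analysis"
begin

definition is_solution ::
  "real \<Rightarrow> real \<Rightarrow> real \<Rightarrow> real \<Rightarrow> real \<Rightarrow> real \<Rightarrow> (real \<Rightarrow> real) \<Rightarrow> bool" where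
  "is_solution B b g0 g1 g2 g3 u \<longleftrightarrow>
     (\<forall>j<4. \<forall>x. ((deriv ^^ j) u has_real_derivative (deriv ^^ Suc j) u x) (at x)) \<and>
     (\<forall>x. (deriv ^^ 4) u x = B * u x) \<and>
     u b = g0 \<and> deriv u b = g1 \<and> (deriv ^^ 2) u b = g2 \<and> (deriv ^^ 3) u b = g3"

definition first_zero :: "(real \<Rightarrow> real) \<Rightarrow> real \<Rightarrow> ereal" where
  "first_zero f b = Inf (ereal ` {x. b < x \<and> f x = 0})"

end

theory Submission
  imports Defs
begin

(* For B = k^4 the solution is a cosh + \<beta> sinh + c cos + d sin, evaluated at k (x - b).
   Writing H = a sinh + \<beta> cosh and P = c sin - d cos, one gets u' = k (H - P) and
   u''' = k^3 (H + P), so both vanish at the first zero t1 = arctan (d / c) of P as soon as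
   H t1 = 0.  Such a k exists by the intermediate value theorem: the hyperbolic coefficients
   a and \<beta> are both negative for small k and both positive for large k.  On [0, t1) one has
   |H| < -P because sinh s / sin s increases on (0, pi/2), so neither u' nor u''' vanishes
   earlier.  An energy estimate shows that the solution is unique on [b, \<infinity>), hence every
   solution has z1 = z3 = b + t1 / k. *)

lemma sinh_mult_cos_le_cosh_mult_sin:
  fixes x :: real
  assumes "0 \<le> x" "x \<le> pi/2"
  shows "sinh x * cos x \<le> cosh x * sin x"
proof -
  let ?h = "\<lambda>x::real. cosh x * sin x - sinh x * cos x"
  have "?h 0 \<le> ?h x"
  proof (rule DERIV_nonneg_imp_nondecreasing[OF assms(1)])
    fix y :: real
    assume y: "0 \<le> y" "y \<le> x"
    have "DERIV ?h y :> 2 * sinh y * sin y"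
      by (auto intro!: derivative_eq_intros simp: algebra_simps)
    moreover have "0 \<le> 2 * sinh y * sin y"
      using y assms by (intro mult_nonneg_nonneg) (auto intro!: sin_ge_zero)
    ultimately show "\<exists>d. DERIV ?h y :> d \<and> 0 \<le> d" by blast
  qed
  then show ?thesis by simp
qed

lemma sinh_div_sin_mono:
  fixes s t :: real
  assumes "0 < s" "s \<le> t" "t < pi/2"
  shows "sinh s / sin s \<le> sinh t / sin t"
proof (rule DERIV_nonneg_imp_nondecreasing[OF assms(2)])
  fix y :: real
  assume y: "s \<le> y" "y \<le> t"
  have "0 < sin y" using y assms by (intro sin_gt_zero2) auto
  then have "DERIV (\<lambda>x. sinh x / sin x) y :> (cosh y * sin y - sinh y * cos y) / (sin y)^2"
    by (auto intro!: derivative_eq_intros simp: power2_eq_square)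
  moreover have "0 \<le> (cosh y * sin y - sinh y * cos y) / (sin y)^2"
    using sinh_mult_cos_le_cosh_mult_sin[of y] y assms by auto
  ultimately show "\<exists>d. DERIV (\<lambda>x. sinh x / sin x) y :> d \<and> 0 \<le> d" by blast
qed

lemma abs_hyp_comb_less_trig_comb:
  fixes a \<beta> c d t1 t :: real
  assumes t1: "0 < t1" "t1 < pi/2" and c: "c > 0" and d: "d = c * tan t1"
    and hyp_zero: "a * sinh t1 + \<beta> * cosh t1 = 0" and \<beta>: "\<bar>\<beta>\<bar> < d"
    and t: "0 \<le> t" "t < t1"
  shows "\<bar>a * sinh t + \<beta> * cosh t\<bar> < d * cos t - c * sin t"
proof -
  define s where "s = t1 - t"
  have s: "0 < s" "s \<le> t1" using t by (auto simp: s_def)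
  have "cos t1 > 0" using t1 by (intro cos_gt_zero_pi) auto
  have "sin t1 > 0" "sin s > 0" using t1 s by (auto intro!: sin_gt_zero2)
  have \<beta>_eq: "\<beta> = - a * sinh t1 / cosh t1"
    using hyp_zero by (simp add: field_simps)
  have "a * sinh t + \<beta> * cosh t = - a * sinh s / cosh t1"
    by (simp add: \<beta>_eq s_def sinh_diff field_simps)
  then have hyp: "\<bar>a * sinh t + \<beta> * cosh t\<bar> = \<bar>a\<bar> * sinh s / cosh t1"
    using \<open>0 < s\<close> by (simp add: abs_mult)
  have trig: "d * cos t - c * sin t = c * sin s / cos t1"
    using \<open>cos t1 > 0\<close> by (simp add: d s_def sin_diff tan_def field_simps)
  have tanh_lt_tan: "\<bar>a\<bar> * sinh t1 / cosh t1 < c * sin t1 / cos t1"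
    using \<beta> t1 by (simp add: \<beta>_eq d tan_def abs_mult)
  have "\<bar>a\<bar> * sinh s / cosh t1 = sinh s / sin s * sin s * \<bar>a\<bar> / cosh t1"
    using \<open>sin s > 0\<close> by simp
  also have "\<dots> \<le> sinh t1 / sin t1 * sin s * \<bar>a\<bar> / cosh t1"
    using sinh_div_sin_mono[OF s t1(2)] \<open>sin s > 0\<close>
    by (intro divide_right_mono mult_right_mono) auto
  also have "\<dots> = sin s / sin t1 * (\<bar>a\<bar> * sinh t1 / cosh t1)"
    by simp
  also have "\<dots> < sin s / sin t1 * (c * sin t1 / cos t1)"
    using tanh_lt_tan \<open>sin s > 0\<close> \<open>sin t1 > 0\<close> by (intro mult_strict_left_mono) auto
  also have "\<dots> = c * sin s / cos t1"
    using \<open>sin t1 > 0\<close> by simp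
  finally show ?thesis using hyp trig by simp
qed

lemma differential_gronwall:
  fixes E E' :: "real \<Rightarrow> real"
  assumes "b \<le> x"
    and deriv: "\<And>y. b \<le> y \<Longrightarrow> y \<le> x \<Longrightarrow> (E has_real_derivative E' y) (at y)"
    and growth: "\<And>y. b \<le> y \<Longrightarrow> y \<le> x \<Longrightarrow> E' y \<le> c * E y"
  shows "E x \<le> E b * exp (c * (x - b))"
proof -
  let ?F = "\<lambda>y. E y * exp (- (c * y))"
  have "?F x \<le> ?F b"
  proof (rule DERIV_nonpos_imp_nonincreasing[OF \<open>b \<le> x\<close>])
    fix y
    assume y: "b \<le> y" "y \<le> x"
    have "DERIV ?F y :> (E' y - c * E y) * exp (- (c * y))"
      using deriv[OF y] by (auto intro!: derivative_eq_intros simp: algebra_simps)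
    moreover have "(E' y - c * E y) * exp (- (c * y)) \<le> 0"
      using growth[OF y] by (simp add: mult_nonpos_nonneg)
    ultimately show "\<exists>d. DERIV ?F y :> d \<and> d \<le> 0" by blast
  qed
  have "E x = ?F x * exp (c * x)"
    by (simp add: exp_minus field_simps)
  also have "\<dots> \<le> ?F b * exp (c * x)"
    using \<open>?F x \<le> ?F b\<close> by (intro mult_right_mono) auto
  also have "\<dots> = E b * exp (c * (x - b))"
    by (simp add: right_diff_distrib exp_diff exp_minus field_simps)
  finally show ?thesis .
qed

lemma cyclic_products_le_sum_squares:
  fixes p q r s B :: real
  shows "2 * (p * q + q * r + r * s + s * (B * p)) \<le> (2 + \<bar>B\<bar>) * (p\<^sup>2 + q\<^sup>2 + r\<^sup>2 + s\<^sup>2)"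
proof -
  have "2 * (s * (B * p)) \<le> \<bar>B\<bar> * (2 * \<bar>s\<bar> * \<bar>p\<bar>)"
    using abs_ge_self[of "B * (2 * s * p)"] by (simp add: abs_mult mult_ac)
  also have "\<dots> \<le> \<bar>B\<bar> * (s\<^sup>2 + p\<^sup>2)"
    using sum_squares_bound[of "\<bar>s\<bar>" "\<bar>p\<bar>"] by (intro mult_left_mono) auto
  finally have "2 * (s * (B * p)) \<le> \<bar>B\<bar> * (s\<^sup>2 + p\<^sup>2)" .
  then have "2 * (p * q + q * r + r * s + s * (B * p))
      \<le> (p\<^sup>2 + q\<^sup>2) + (q\<^sup>2 + r\<^sup>2) + (r\<^sup>2 + s\<^sup>2) + \<bar>B\<bar> * (s\<^sup>2 + p\<^sup>2)"
    using sum_squares_bound[of p q] sum_squares_bound[of q r] sum_squares_bound[of r s]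
    by (simp add: distrib_left mult.assoc)
  also have "\<dots> \<le> (2 + \<bar>B\<bar>) * (p\<^sup>2 + q\<^sup>2 + r\<^sup>2 + s\<^sup>2)"
    by (simp add: algebra_simps)
  finally show ?thesis .
qed

lemma fourth_order_system_vanishes:
  fixes w :: "nat \<Rightarrow> real \<Rightarrow> real"
  assumes deriv: "\<And>j y. j < 4 \<Longrightarrow> (w j has_real_derivative w (Suc j) y) (at y)"
    and closing: "\<And>y. w 4 y = B * w 0 y"
    and init: "\<And>j. j < 4 \<Longrightarrow> w j b = 0"
    and "b \<le> x" "j < 4"
  shows "w j x = 0"
proof -
  define E where "E y = (w 0 y)\<^sup>2 + (w 1 y)\<^sup>2 + (w 2 y)\<^sup>2 + (w 3 y)\<^sup>2" for y
  define E' where "E' y = 2 * (w 0 y * w 1 y + w 1 y * w 2 y + w 2 y * w 3 y + w 3 y * (B * w 0 y))" for y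
  have "(E has_real_derivative E' y) (at y)" for y
    using deriv[of 0 y] deriv[of 1 y] deriv[of 2 y] deriv[of 3 y] closing[of y]
    unfolding E_def E'_def
    by (auto intro!: derivative_eq_intros simp: eval_nat_numeral algebra_simps)
  moreover have "E' y \<le> (2 + \<bar>B\<bar>) * E y" for y
    unfolding E_def E'_def by (rule cyclic_products_le_sum_squares)
  ultimately have "E x \<le> E b * exp ((2 + \<bar>B\<bar>) * (x - b))"
    using \<open>b \<le> x\<close> by (intro differential_gronwall)
  moreover have "E b = 0"
    using init by (simp add: E_def)
  ultimately have "E x \<le> 0"
    by simp
  then have "(w 0 x)\<^sup>2 = 0 \<and> (w 1 x)\<^sup>2 = 0 \<and> (w 2 x)\<^sup>2 = 0 \<and> (w 3 x)\<^sup>2 = 0"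
    unfolding E_def
    using zero_le_power2[of "w 0 x"] zero_le_power2[of "w 1 x"] zero_le_power2[of "w 2 x"]
      zero_le_power2[of "w 3 x"]
    by linarith
  then have "w 0 x = 0 \<and> w 1 x = 0 \<and> w 2 x = 0 \<and> w 3 x = 0"
    by simp
  moreover have "j = 0 \<or> j = 1 \<or> j = 2 \<or> j = 3"
    using \<open>j < 4\<close> by auto
  ultimately show ?thesis
    by auto
qed

lemma is_solution_unique:
  assumes u: "is_solution B b g0 g1 g2 g3 u" and v: "is_solution B b g0 g1 g2 g3 v"
    and "b \<le> x" "j < 4"
  shows "(deriv ^^ j) v x = (deriv ^^ j) u x"
proof -
  define w where "w j y = (deriv ^^ j) v y - (deriv ^^ j) u y" for j y
  have "w j x = 0"
  proof (rule fourth_order_system_vanishes[where w = w and B = B and b = b and x = x and j = j])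
    show "(w j has_real_derivative w (Suc j) y) (at y)" if "j < 4" for j y
      using u v that unfolding is_solution_def w_def by (auto intro!: DERIV_diff)
    show "w 4 y = B * w 0 y" for y
      using u v unfolding is_solution_def w_def by (simp add: algebra_simps)
    show "w j b = 0" if "j < 4" for j
      using u v that unfolding is_solution_def w_def
      by (auto simp: less_Suc_eq numeral_eq_Suc)
  qed fact+
  then show ?thesis
    by (simp add: w_def)
qed

lemma first_zero_cong:
  assumes "\<And>x. b < x \<Longrightarrow> f x = g x"
  shows "first_zero f b = first_zero g b"
  unfolding first_zero_def using assms by metis

lemma first_zero_eqI:
  assumes "b < z" "f z = 0" and nonzero: "\<And>y. b < y \<Longrightarrow> y < z \<Longrightarrow> f y \<noteq> 0"
  shows "first_zero f b = ereal z"
  unfolding first_zero_def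
proof (rule antisym)
  show "Inf (ereal ` {x. b < x \<and> f x = 0}) \<le> ereal z"
    using assms by (intro Inf_lower) auto
  show "ereal z \<le> Inf (ereal ` {x. b < x \<and> f x = 0})"
  proof (rule Inf_greatest)
    fix e
    assume "e \<in> ereal ` {x. b < x \<and> f x = 0}"
    then obtain y where "e = ereal y" "b < y" "f y = 0"
      by auto
    with nonzero have "z \<le> y"
      by (meson not_le)
    with \<open>e = ereal y\<close> show "ereal z \<le> e"
      by simp
  qed
qed

definition hyp_trig :: "real \<Rightarrow> real \<Rightarrow> real \<Rightarrow> real \<Rightarrow> real \<Rightarrow> real \<Rightarrow> real \<Rightarrow> real" where
  "hyp_trig a \<beta> c d k b x =
     a * cosh (k * (x - b)) + \<beta> * sinh (k * (x - b)) + c * cos (k * (x - b)) + d * sin (k * (x - b))"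

lemma hyp_trig_has_real_derivative:
  "(hyp_trig a \<beta> c d k b has_real_derivative hyp_trig (k * \<beta>) (k * a) (k * d) (- (k * c)) k b x) (at x)"
  unfolding hyp_trig_def by (auto intro!: derivative_eq_intros simp: algebra_simps)

lemma deriv_hyp_trig: "deriv (hyp_trig a \<beta> c d k b) = hyp_trig (k * \<beta>) (k * a) (k * d) (- (k * c)) k b"
  using DERIV_imp_deriv[OF hyp_trig_has_real_derivative] by blast

lemma has_real_derivative_deriv_funpow_hyp_trig:
  "((deriv ^^ j) (hyp_trig a \<beta> c d k b) has_real_derivative (deriv ^^ Suc j) (hyp_trig a \<beta> c d k b) x) (at x)"
proof (induction j arbitrary: a \<beta> c d)
  case 0
  show ?case
    by (simp add: deriv_hyp_trig hyp_trig_has_real_derivative)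
next
  case (Suc j)
  show ?case
    using Suc.IH[of "k * \<beta>" "k * a" "k * d" "- (k * c)"] by (simp add: funpow_swap1 deriv_hyp_trig)
qed

lemma deriv_funpow_hyp_trig:
  "(deriv ^^ 2) (hyp_trig a \<beta> c d k b) = hyp_trig (k\<^sup>2 * a) (k\<^sup>2 * \<beta>) (- (k\<^sup>2 * c)) (- (k\<^sup>2 * d)) k b"
  "(deriv ^^ 3) (hyp_trig a \<beta> c d k b) = hyp_trig (k ^ 3 * \<beta>) (k ^ 3 * a) (- (k ^ 3 * d)) (k ^ 3 * c) k b"
  "(deriv ^^ 4) (hyp_trig a \<beta> c d k b) x = k ^ 4 * hyp_trig a \<beta> c d k b x"
  by (simp_all add: eval_nat_numeral deriv_hyp_trig hyp_trig_def algebra_simps)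

lemma is_solution_hyp_trig:
  "is_solution (k ^ 4) b (a + c) (k * (\<beta> + d)) (k\<^sup>2 * (a - c)) (k ^ 3 * (\<beta> - d)) (hyp_trig a \<beta> c d k b)"
  unfolding is_solution_def
  by (simp del: funpow.simps add: has_real_derivative_deriv_funpow_hyp_trig deriv_funpow_hyp_trig
      deriv_hyp_trig hyp_trig_def algebra_simps)

lemma first_zeros_hyp_trig:
  fixes a \<beta> c d k b :: real
  defines "u \<equiv> hyp_trig a \<beta> c d k b" and "t1 \<equiv> arctan (d / c)"
  assumes "k > 0" "c > 0" "\<bar>\<beta>\<bar> < d" and hyp_zero: "a * sinh t1 + \<beta> * cosh t1 = 0"
  shows "first_zero (deriv u) b = ereal (b + t1 / k)"
    and "first_zero ((deriv ^^ 3) u) b = ereal (b + t1 / k)"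
proof -
  define H where "H s = a * sinh s + \<beta> * cosh s" for s
  define P where "P s = c * sin s - d * cos s" for s
  have deriv1: "deriv u y = k * (H (k * (y - b)) - P (k * (y - b)))" for y
    by (simp add: u_def H_def P_def deriv_hyp_trig hyp_trig_def algebra_simps)
  have deriv3: "(deriv ^^ 3) u y = k ^ 3 * (H (k * (y - b)) + P (k * (y - b)))" for y
    by (simp add: u_def H_def P_def deriv_funpow_hyp_trig hyp_trig_def algebra_simps)
  have "d > 0"
    using \<open>\<bar>\<beta>\<bar> < d\<close> by linarith
  then have t1: "0 < t1" "t1 < pi/2"
    using \<open>c > 0\<close> arctan_ubound by (auto simp: t1_def)
  have "cos t1 > 0"
    using t1 by (intro cos_gt_zero_pi) auto
  have d: "d = c * tan t1"
    using \<open>c > 0\<close> by (simp add: t1_def tan_arctan)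
  have "P t1 = 0"
    using \<open>cos t1 > 0\<close> by (simp add: P_def d tan_def)
  moreover have "H t1 = 0"
    using hyp_zero by (simp add: H_def)
  moreover have "k * ((b + t1 / k) - b) = t1"
    using \<open>k > 0\<close> by simp
  ultimately have zero_at: "deriv u (b + t1 / k) = 0" "(deriv ^^ 3) u (b + t1 / k) = 0"
    by (simp_all only: deriv1 deriv3) simp_all
  have dominated: "\<bar>H (k * (y - b))\<bar> < - P (k * (y - b))" if "b < y" "y < b + t1 / k" for y
  proof -
    have "0 \<le> k * (y - b)" "k * (y - b) < t1"
      using that \<open>k > 0\<close> by (simp_all add: field_simps)
    then show ?thesis
      using abs_hyp_comb_less_trig_comb[OF t1 \<open>c > 0\<close> d hyp_zero \<open>\<bar>\<beta>\<bar> < d\<close>]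
      by (simp add: H_def P_def)
  qed
  have "b < b + t1 / k"
    using t1 \<open>k > 0\<close> by simp
  show "first_zero (deriv u) b = ereal (b + t1 / k)"
  proof (rule first_zero_eqI[where f = "deriv u", OF \<open>b < b + t1 / k\<close> zero_at(1)])
    fix y
    assume "b < y" "y < b + t1 / k"
    then have "H (k * (y - b)) - P (k * (y - b)) > 0"
      using dominated by fastforce
    then show "deriv u y \<noteq> 0"
      using \<open>k > 0\<close> by (simp add: deriv1)
  qed
  show "first_zero ((deriv ^^ 3) u) b = ereal (b + t1 / k)"
  proof (rule first_zero_eqI[where f = "(deriv ^^ 3) u", OF \<open>b < b + t1 / k\<close> zero_at(2)])
    fix y
    assume "b < y" "y < b + t1 / k"
    then have "H (k * (y - b)) + P (k * (y - b)) < 0"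
      using dominated by fastforce
    then show "(deriv ^^ 3) u y \<noteq> 0"
      using \<open>k > 0\<close> by (simp add: deriv3)
  qed
qed

lemma exists_scale_with_common_zero:
  fixes g0 g1 g2 g3 :: real
  assumes "g0 > 0" "g1 > 0" "g2 < 0" "g3 < 0"
  defines "a \<equiv> \<lambda>k. (g0 + g2 / k\<^sup>2) / 2" and "\<beta> \<equiv> \<lambda>k. (g1 / k + g3 / k ^ 3) / 2"
    and "c \<equiv> \<lambda>k. (g0 - g2 / k\<^sup>2) / 2" and "d \<equiv> \<lambda>k. (g1 / k - g3 / k ^ 3) / 2"
  shows "\<exists>k>0. c k > 0 \<and> \<bar>\<beta> k\<bar> < d k \<and>
           a k * sinh (arctan (d k / c k)) + \<beta> k * cosh (arctan (d k / c k)) = 0"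
proof -
  define G where "G k = a k * sinh (arctan (d k / c k)) + \<beta> k * cosh (arctan (d k / c k))" for k
  have c_pos: "c k > 0" and \<beta>_less: "\<bar>\<beta> k\<bar> < d k" if "k > 0" for k
  proof -
    have "g2 / k\<^sup>2 < 0" "g1 / k > 0" "g3 / k ^ 3 < 0"
      using assms that by (simp_all add: divide_neg_pos)
    then show "c k > 0" "\<bar>\<beta> k\<bar> < d k"
      using \<open>g0 > 0\<close> by (simp_all add: c_def \<beta>_def d_def)
  qed
  have arctan_pos: "arctan (d k / c k) > 0" if "k > 0" for k
    using c_pos[OF that] \<beta>_less[OF that] by simp
  define p where "p = - g2 / g0"
  define q where "q = - g3 / g1"
  have a_eq: "a k = g0 * (k\<^sup>2 - p) / (2 * k\<^sup>2)" and \<beta>_eq: "\<beta> k = g1 * (k\<^sup>2 - q) / (2 * k ^ 3)"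
    if "k > 0" for k
    using assms that by (simp_all add: a_def \<beta>_def p_def q_def field_simps eval_nat_numeral)
  have "p > 0" "q > 0"
    using assms by (simp_all add: p_def q_def divide_neg_pos)
  define k0 where "k0 = sqrt (min p q)"
  define k1 where "k1 = sqrt (max p q)"
  have "k0 > 0" "k0 \<le> k1"
    using \<open>p > 0\<close> \<open>q > 0\<close> by (simp_all add: k0_def k1_def)
  have "G k0 \<le> 0"
  proof -
    have "k0\<^sup>2 \<le> p" "k0\<^sup>2 \<le> q"
      using \<open>p > 0\<close> \<open>q > 0\<close> by (simp_all add: k0_def)
    then have "a k0 \<le> 0" "\<beta> k0 \<le> 0"
      using \<open>k0 > 0\<close> \<open>g0 > 0\<close> \<open>g1 > 0\<close> by (simp_all add: a_eq \<beta>_eq divide_nonpos_pos mult_nonneg_nonpos)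
    then show ?thesis
      using arctan_pos[OF \<open>k0 > 0\<close>]
      by (simp add: G_def add_nonpos_nonpos mult_nonpos_nonneg)
  qed
  moreover have "G k1 \<ge> 0"
  proof -
    have "k1 > 0" "p \<le> k1\<^sup>2" "q \<le> k1\<^sup>2"
      using \<open>p > 0\<close> \<open>q > 0\<close> by (simp_all add: k1_def)
    then have "a k1 \<ge> 0" "\<beta> k1 \<ge> 0"
      using \<open>g0 > 0\<close> \<open>g1 > 0\<close> by (simp_all add: a_eq \<beta>_eq)
    then show ?thesis
      using arctan_pos[OF \<open>k1 > 0\<close>] by (simp add: G_def)
  qed
  moreover have "continuous_on {k0..k1} G"
  proof -
    have "k \<noteq> 0" "c k \<noteq> 0" if "k \<in> {k0..k1}" for k
      using that \<open>k0 > 0\<close> c_pos[of k] by auto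
    then show ?thesis
      unfolding G_def a_def \<beta>_def c_def d_def by (intro continuous_intros) auto
  qed
  ultimately obtain k where "k0 \<le> k" "G k = 0"
    using IVT'[of G k0 0 k1] \<open>k0 \<le> k1\<close> by auto
  then show ?thesis
    using \<open>k0 > 0\<close> c_pos \<beta>_less by (intro exI[of _ k]) (simp add: G_def)
qed

theorem lemma1:
  fixes b g0 g1 g2 g3 :: real
  assumes "g0 > 0" and "g1 > 0" and "g2 < 0" and "g3 < 0"
  shows "\<exists>B>0. (\<exists>u. is_solution B b g0 g1 g2 g3 u) \<and>
           (\<forall>u. is_solution B b g0 g1 g2 g3 u \<longrightarrow>
                first_zero (deriv u) b = first_zero ((deriv ^^ 3) u) b)"
proof -
  define a where "a k = (g0 + g2 / k\<^sup>2) / 2" for k :: real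
  define \<beta> where "\<beta> k = (g1 / k + g3 / k ^ 3) / 2" for k :: real
  define c where "c k = (g0 - g2 / k\<^sup>2) / 2" for k :: real
  define d where "d k = (g1 / k - g3 / k ^ 3) / 2" for k :: real
  obtain k where "k > 0" "c k > 0" "\<bar>\<beta> k\<bar> < d k"
    and hyp_zero: "a k * sinh (arctan (d k / c k)) + \<beta> k * cosh (arctan (d k / c k)) = 0"
    using exists_scale_with_common_zero[OF assms] unfolding a_def \<beta>_def c_def d_def by blast
  define u where "u = hyp_trig (a k) (\<beta> k) (c k) (d k) k b"
  have "a k + c k = g0" "k * (\<beta> k + d k) = g1" "k\<^sup>2 * (a k - c k) = g2" "k ^ 3 * (\<beta> k - d k) = g3"
    using \<open>k > 0\<close> by (simp_all add: a_def \<beta>_def c_def d_def field_simps)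
  then have u: "is_solution (k ^ 4) b g0 g1 g2 g3 u"
    using is_solution_hyp_trig[of k b "a k" "c k" "\<beta> k" "d k"] by (simp only: u_def)
  have zeros: "first_zero (deriv u) b = first_zero ((deriv ^^ 3) u) b"
    using first_zeros_hyp_trig[OF \<open>k > 0\<close> \<open>c k > 0\<close> \<open>\<bar>\<beta> k\<bar> < d k\<close> hyp_zero] by (simp add: u_def)
  show ?thesis
  proof (intro exI[of _ "k ^ 4"] conjI allI impI)
    show "0 < k ^ 4" "\<exists>u. is_solution (k ^ 4) b g0 g1 g2 g3 u"
      using \<open>k > 0\<close> u by auto
    fix v
    assume v: "is_solution (k ^ 4) b g0 g1 g2 g3 v"
    have same: "first_zero ((deriv ^^ j) v) b = first_zero ((deriv ^^ j) u) b" if "j < 4" for j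
      using is_solution_unique[OF u v _ that] by (intro first_zero_cong) simp
    show "first_zero (deriv v) b = first_zero ((deriv ^^ 3) v) b"
      using same[of 1] same[of 3] zeros by simp
  qed
qed

end
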